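(* Let $\mathcal{M}_\Sigma$ be a trace monoid and $p\in(0,p_\Sigma)$. Let $S\subseteq\Sigma$ and let $a\in\Sigma\setminus S$ be such that $\mathscr{L}(a)\cap S\neq\emptyset$, and put $T=S\setminus\mathscr{L}(a)$. Then $$\frac{\mu_S(p)}{\mu_T(p)}=B_{S,p}(\mathcal{M}_T)\qquad\text{and}\qquad p\leqslant\frac{\mu_S(p)}{\mu_T(p)}\leqslant 1-p.$$
   Context: Let $\Sigma$ be a finite alphabet and $\mathcal{R}$ a reflexive and symmetric binary relation on $\Sigma$. For $S\subseteq\Sigma$, $\mathcal{M}_S$ is the trace monoid on $S$ (quotient of $S^*$ by the congruence generated by $ab=ba$ for $(a,b)\notin\mathcal{R}$), viewed as a submonoid of $\mathcal{M}_\Sigma$; $|x|$ is the length of a trace. $\mathscr{L}(a)=\{b\in\Sigma:(a,b)\in\mathcal{R}\}$. A clique of $S$ is a subset of $S$ of pairwise non-$\mathcal{R}$-related letters (empty set included); $\mu_S(X)=\sum_{\gamma\text{ clique of }S}(-1)^{|\gamma|}X^{|\gamma|}$, $\mu_\emptyset=1$. For $\Sigma\neq\emptyset$, $p_\Sigma$ is the unique root of smallest modulus of $\mu_\Sigma$ (real, $0<p_\Sigma\leqslant1$). For $p\in(0,p_\Sigma)$ and $S\subseteq\Sigma$, $\sum_{x\in\mathcal{M}_S}p^{|x|}=1/\mu_S(p)<\infty$, and $B_{S,p}$ is the probability distribution on $\mathcal{M}_S$ with $B_{S,p}(\{x\})=\mu_S(p)p^{|x|}$. *)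

theory Defs
  imports "HOL-Analysis.Analysis"
begin

text \<open>The relation R is the (reflexive, symmetric) dependence relation; letters a, b
  commute iff not R a b.  Traces are equivalence classes of words.\<close>

definition swap_step :: "('a \<Rightarrow> 'a \<Rightarrow> bool) \<Rightarrow> 'a list \<Rightarrow> 'a list \<Rightarrow> bool" where
  "swap_step R u v \<longleftrightarrow> (\<exists>xs a b ys. u = xs @ a # b # ys \<and> v = xs @ b # a # ys \<and> \<not> R a b)"

definition trace_eq :: "('a \<Rightarrow> 'a \<Rightarrow> bool) \<Rightarrow> 'a list \<Rightarrow> 'a list \<Rightarrow> bool" where
  "trace_eq R = (swap_step R)\<^sup>*\<^sup>*"

definition trace_of :: "('a \<Rightarrow> 'a \<Rightarrow> bool) \<Rightarrow> 'a list \<Rightarrow> 'a list set" where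
  "trace_of R w = {v. trace_eq R w v}"

definition trace_monoid :: "('a \<Rightarrow> 'a \<Rightarrow> bool) \<Rightarrow> 'a set \<Rightarrow> 'a list set set" where
  "trace_monoid R S = trace_of R ` lists S"

definition trace_len :: "'a list set \<Rightarrow> nat" where
  "trace_len x = length (SOME w. w \<in> x)"

definition ell :: "('a \<Rightarrow> 'a \<Rightarrow> bool) \<Rightarrow> 'a set \<Rightarrow> 'a \<Rightarrow> 'a set" where
  "ell R \<Sigma> a = {b \<in> \<Sigma>. R a b}"

definition cliques :: "('a \<Rightarrow> 'a \<Rightarrow> bool) \<Rightarrow> 'a set \<Rightarrow> 'a set set" where
  "cliques R S = {\<gamma>. \<gamma> \<subseteq> S \<and> (\<forall>x\<in>\<gamma>. \<forall>y\<in>\<gamma>. x \<noteq> y \<longrightarrow> \<not> R x y)}"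

definition mu :: "('a \<Rightarrow> 'a \<Rightarrow> bool) \<Rightarrow> 'a set \<Rightarrow> 'b::comm_ring_1 \<Rightarrow> 'b" where
  "mu R S X = (\<Sum>\<gamma>\<in>cliques R S. (-1) ^ card \<gamma> * X ^ card \<gamma>)"

text \<open>p_Sigma: the smallest modulus of a complex root of mu_Sigma (which, by the
  paper, is attained by a unique root, which is real and in (0,1]).\<close>
definition p_Sigma :: "('a \<Rightarrow> 'a \<Rightarrow> bool) \<Rightarrow> 'a set \<Rightarrow> real" where
  "p_Sigma R \<Sigma> = Inf {norm z | z :: complex. mu R \<Sigma> z = 0}"

definition B :: "('a \<Rightarrow> 'a \<Rightarrow> bool) \<Rightarrow> 'a set \<Rightarrow> real \<Rightarrow> 'a list set set \<Rightarrow> real" where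
  "B R S p A = infsum (\<lambda>x. mu R S p * p ^ trace_len x) A"

end

theory Submission
  imports Defs "HOL-Complex_Analysis.Cauchy_Integral_Formula"
begin

text \<open>Let G_U be the generating function of the number of traces over U by length.
  Moebius inversion in the trace monoid gives G_U * mu_U = 1: the alternating sum over the
  cliques that a nonempty trace can start with vanishes. As mu_Sigma has no root of modulus
  below p_Sigma, G_Sigma and hence every G_U converges at p, so mu_U(p) = 1/G_U(p) is positive
  and decreasing in U, and the B_{S,p}-mass of M_T is mu_S(p) G_T(p) = mu_S(p)/mu_T(p).
  Splitting cliques according to whether they contain a letter b gives
  mu_{U+b} = mu_U - X mu_{U - L(b)}. For b = a this shows p mu_T(p) < mu_S(p); for
  b in L(a) inside S it shows mu_S(p) <= (1-p) mu_{S-b}(p), and mu_{S-b}(p) <= mu_T(p)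
  because T is contained in S - b.\<close>

section \<open>Trace equivalence\<close>

lemma swap_step_mset: "swap_step R u v \<Longrightarrow> mset u = mset v"
  unfolding swap_step_def by auto

lemma trace_eq_mset: "trace_eq R u v \<Longrightarrow> mset u = mset v"
  unfolding trace_eq_def by (induction rule: rtranclp_induct) (auto dest: swap_step_mset)

lemma trace_eq_set: "trace_eq R u v \<Longrightarrow> set u = set v"
  by (metis trace_eq_mset set_mset_mset)

lemma trace_eq_length: "trace_eq R u v \<Longrightarrow> length u = length v"
  by (metis trace_eq_mset size_mset)

lemma trace_eq_refl [simp]: "trace_eq R u u"
  unfolding trace_eq_def by simp

lemma trace_eq_trans: "trace_eq R u v \<Longrightarrow> trace_eq R v w \<Longrightarrow> trace_eq R u w"
  unfolding trace_eq_def by (rule rtranclp_trans)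

lemma swap_step_append: "swap_step R u v \<Longrightarrow> swap_step R (xs @ u @ ys) (xs @ v @ ys)"
  unfolding swap_step_def by (auto, metis append.assoc append_Cons)

lemma trace_eq_append_context: "trace_eq R u v \<Longrightarrow> trace_eq R (xs @ u @ ys) (xs @ v @ ys)"
  unfolding trace_eq_def
  by (induction rule: rtranclp_induct) (auto intro: rtranclp.rtrancl_into_rtrancl swap_step_append)

lemma trace_eq_append: "trace_eq R u u' \<Longrightarrow> trace_eq R v v' \<Longrightarrow> trace_eq R (u @ v) (u' @ v')"
  using trace_eq_append_context[of R u u' "[]" v] trace_eq_append_context[of R v v' u' "[]"]
  by (auto intro: trace_eq_trans)

lemma trace_eq_Cons: "trace_eq R u v \<Longrightarrow> trace_eq R (c # u) (c # v)"
  using trace_eq_append_context[of R u v "[c]" "[]"] by simp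

lemma trace_eq_move_to_front:
  assumes "\<forall>x\<in>set xs. \<forall>y\<in>set xs. x \<noteq> y \<longrightarrow> \<not> R x y" "c \<in> set xs"
  shows "trace_eq R xs (c # remove1 c xs)"
  using assms
proof (induction xs)
  case Nil
  then show ?case by simp
next
  case (Cons x xs)
  show ?case
  proof (cases "x = c")
    case False
    then have "trace_eq R (x # xs) (x # c # remove1 c xs)"
      using Cons by (auto intro: trace_eq_Cons)
    moreover have "swap_step R (x # c # remove1 c xs) (c # x # remove1 c xs)"
      using Cons.prems False unfolding swap_step_def by (metis append_Nil list.set_intros(1))
    ultimately show ?thesis
      using False unfolding trace_eq_def by auto
  qed simp
qed

locale dependence_alphabet =
  fixes R :: "'a \<Rightarrow> 'a \<Rightarrow> bool" and A :: "'a set"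
  assumes refl_R: "\<forall>x\<in>A. R x x"
    and sym_R: "\<forall>x\<in>A. \<forall>y\<in>A. R x y \<longrightarrow> R y x"
begin

lemma swap_step_sym:
  assumes "swap_step R u v" "set u \<subseteq> A"
  shows "swap_step R v u"
proof -
  obtain xs a b ys where u: "u = xs @ a # b # ys" and v: "v = xs @ b # a # ys" and "\<not> R a b"
    using assms(1) unfolding swap_step_def by blast
  then have "\<not> R b a"
    using sym_R assms(2) by auto
  then show ?thesis
    unfolding swap_step_def u v by blast
qed

lemma trace_eq_sym: "trace_eq R u v \<Longrightarrow> set u \<subseteq> A \<Longrightarrow> trace_eq R v u"
  unfolding trace_eq_def
proof (induction rule: rtranclp_induct)
  case (step v w)
  then have "set v \<subseteq> A"
    using trace_eq_set[of R u v] unfolding trace_eq_def by auto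
  then show ?case
    using step swap_step_sym by (meson converse_rtranclp_into_rtranclp)
qed simp

lemma swap_step_remove1:
  assumes "swap_step R u v" "set u \<subseteq> A"
  shows "remove1 c u = remove1 c v \<or> swap_step R (remove1 c u) (remove1 c v)"
proof -
  obtain xs a b ys where u: "u = xs @ a # b # ys" and v: "v = xs @ b # a # ys" and "\<not> R a b"
    using assms(1) unfolding swap_step_def by blast
  moreover have "a \<noteq> b"
    using \<open>\<not> R a b\<close> refl_R assms(2) u by auto
  ultimately show ?thesis
    unfolding swap_step_def by (cases "c \<in> set xs") (auto simp: remove1_append)
qed

lemma trace_eq_remove1: "trace_eq R u v \<Longrightarrow> set u \<subseteq> A \<Longrightarrow> trace_eq R (remove1 c u) (remove1 c v)"
  unfolding trace_eq_def
proof (induction rule: rtranclp_induct)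
  case (step v w)
  then have "set v \<subseteq> A"
    using trace_eq_set[of R u v] unfolding trace_eq_def by auto
  then show ?case
    using step swap_step_remove1 by (metis rtranclp.rtrancl_into_rtrancl)
qed simp

lemma trace_eq_Cons_cancel:
  "trace_eq R (c # u) (c # v) \<Longrightarrow> set (c # u) \<subseteq> A \<Longrightarrow> trace_eq R u v"
  using trace_eq_remove1[of "c # u" "c # v" c] by simp

lemma trace_eq_append_cancel:
  "trace_eq R (xs @ u) (xs @ v) \<Longrightarrow> set (xs @ u) \<subseteq> A \<Longrightarrow> trace_eq R u v"
proof (induction xs)
  case (Cons x xs)
  then show ?case
    using trace_eq_Cons_cancel[of x "xs @ u" "xs @ v"] by auto
qed simp

lemma trace_eq_filter_dependent:
  assumes "trace_eq R u v" "set u \<subseteq> A" "R c d" "c \<in> A" "d \<in> A"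
  shows "filter (\<lambda>x. x = c \<or> x = d) u = filter (\<lambda>x. x = c \<or> x = d) v"
  using assms(1,2) unfolding trace_eq_def
proof (induction rule: rtranclp_induct)
  case (step v w)
  obtain xs a b ys where v: "v = xs @ a # b # ys" and w: "w = xs @ b # a # ys" and "\<not> R a b"
    using step(2) unfolding swap_step_def by blast
  have "set v \<subseteq> A"
    using step trace_eq_set[of R u v] unfolding trace_eq_def by auto
  then have "\<not> ((a = c \<or> a = d) \<and> (b = c \<or> b = d))"
    using \<open>\<not> R a b\<close> refl_R sym_R assms(3-5) v by auto
  then show ?case
    using step unfolding v w by auto
qed simp

lemma trace_eq_Cons_Cons:
  assumes "trace_eq R (c # u) (d # v)" "set (c # u) \<subseteq> A" "c \<noteq> d"
  shows "\<not> R c d" and "trace_eq R u (d # remove1 c v)"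
proof -
  have "d \<in> A"
    using trace_eq_set[OF assms(1)] assms(2) by auto
  show "\<not> R c d"
  proof
    assume "R c d"
    then have "filter (\<lambda>x. x = c \<or> x = d) (c # u) = filter (\<lambda>x. x = c \<or> x = d) (d # v)"
      using trace_eq_filter_dependent[OF assms(1,2) \<open>R c d\<close> _ \<open>d \<in> A\<close>] assms(2) by auto
    then show False
      using assms(3) by simp
  qed
  show "trace_eq R u (d # remove1 c v)"
    using trace_eq_remove1[OF assms(1,2), of c] assms(3) by simp
qed

section \<open>Initial letters\<close>

definition initials :: "'a list \<Rightarrow> 'a set" where
  "initials w = {c. \<exists>u. trace_eq R w (c # u)}"

lemma initials_subset_set: "initials w \<subseteq> set w"
  unfolding initials_def using trace_eq_set by fastforce

lemma initials_independent:
  assumes "c \<in> initials w" "d \<in> initials w" "c \<noteq> d" "set w \<subseteq> A"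
  shows "\<not> R c d"
proof -
  obtain u v where u: "trace_eq R w (c # u)" and v: "trace_eq R w (d # v)"
    using assms(1,2) unfolding initials_def by auto
  have "trace_eq R (c # u) (d # v)"
    using trace_eq_sym[OF u assms(4)] v by (rule trace_eq_trans)
  moreover have "set (c # u) \<subseteq> A"
    using trace_eq_set[OF u] assms(4) by auto
  ultimately show ?thesis
    using trace_eq_Cons_Cons(1) assms(3) by blast
qed

lemma initials_Cons:
  assumes "trace_eq R w (c # v)" "set w \<subseteq> A" "d \<in> initials w" "d \<noteq> c"
  shows "d \<in> initials v"
proof -
  obtain v' where "trace_eq R w (d # v')"
    using assms(3) unfolding initials_def by auto
  then have "trace_eq R (c # v) (d # v')"
    using trace_eq_sym[OF assms(1,2)] trace_eq_trans by blast
  moreover have "set (c # v) \<subseteq> A"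
    using trace_eq_set[OF assms(1)] assms(2) by auto
  ultimately show ?thesis
    using trace_eq_Cons_Cons(2) assms(4) unfolding initials_def by fastforce
qed

lemma initials_prefix:
  assumes "distinct xs" "set xs \<subseteq> initials w" "set w \<subseteq> A"
  shows "\<exists>u. trace_eq R w (xs @ u)"
  using assms
proof (induction xs arbitrary: w)
  case Nil
  then show ?case by (metis append_Nil trace_eq_refl)
next
  case (Cons c xs)
  obtain v where v: "trace_eq R w (c # v)"
    using Cons.prems unfolding initials_def by auto
  have "set xs \<subseteq> initials v" "set v \<subseteq> A"
    using initials_Cons[OF v] trace_eq_set[OF v] Cons.prems by auto
  then obtain u where "trace_eq R v (xs @ u)"
    using Cons.IH[of v] Cons.prems(1) by auto
  then show ?case
    using v trace_eq_Cons trace_eq_trans by fastforce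
qed

lemma prefix_initials:
  assumes "\<forall>x\<in>set xs. \<forall>y\<in>set xs. x \<noteq> y \<longrightarrow> \<not> R x y" "trace_eq R w (xs @ u)"
  shows "set xs \<subseteq> initials w"
proof
  fix c assume "c \<in> set xs"
  then have "trace_eq R (xs @ u) (c # (remove1 c xs @ u))"
    using trace_eq_append[OF trace_eq_move_to_front[OF assms(1)] trace_eq_refl] by auto
  then show "c \<in> initials w"
    unfolding initials_def using assms(2) trace_eq_trans by blast
qed

end

section \<open>Counting traces by length\<close>

definition traces_of_length :: "('a \<Rightarrow> 'a \<Rightarrow> bool) \<Rightarrow> 'a set \<Rightarrow> nat \<Rightarrow> 'a list set set" where
  "traces_of_length R U n = trace_of R ` {w \<in> lists U. length w = n}"

definition count_traces :: "('a \<Rightarrow> 'a \<Rightarrow> bool) \<Rightarrow> 'a set \<Rightarrow> nat \<Rightarrow> nat" where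
  "count_traces R U n = card (traces_of_length R U n)"

definition trace_initials :: "'a list set \<Rightarrow> 'a set" where
  "trace_initials Y = {c. \<exists>u. c # u \<in> Y}"

lemma mem_trace_of: "v \<in> trace_of R w \<longleftrightarrow> trace_eq R w v"
  unfolding trace_of_def by simp

lemma trace_eq_some_representative: "trace_eq R w (SOME v. v \<in> trace_of R w)"
  by (metis mem_trace_of someI trace_eq_refl)

lemma trace_len_trace_of [simp]: "trace_len (trace_of R w) = length w"
  unfolding trace_len_def using trace_eq_some_representative trace_eq_length by metis

lemma trace_of_eqD: "trace_of R u = trace_of R v \<Longrightarrow> trace_eq R u v"
  by (metis mem_trace_of trace_eq_refl)

lemma finite_traces_of_length: "finite U \<Longrightarrow> finite (traces_of_length R U n)"
proof -
  assume "finite U"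
  have "{w \<in> lists U. length w = n} = {w. set w \<subseteq> U \<and> length w = n}"
    by auto
  then show ?thesis
    unfolding traces_of_length_def using finite_lists_length_eq[OF \<open>finite U\<close>] by auto
qed

lemma count_traces_mono: "U \<subseteq> V \<Longrightarrow> finite V \<Longrightarrow> count_traces R U n \<le> count_traces R V n"
  unfolding count_traces_def traces_of_length_def
  by (intro card_mono finite_traces_of_length[unfolded traces_of_length_def]) auto

lemma count_traces_0 [simp]: "count_traces R U 0 = 1"
proof -
  have "traces_of_length R U 0 = {trace_of R []}"
    unfolding traces_of_length_def by auto
  then show ?thesis
    unfolding count_traces_def by simp
qed

context dependence_alphabet
begin

lemma trace_of_eq: "trace_eq R u v \<Longrightarrow> set u \<subseteq> A \<Longrightarrow> trace_of R u = trace_of R v"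
  unfolding trace_of_def using trace_eq_sym trace_eq_trans trace_eq_set by blast

lemma trace_initials_trace_of [simp]: "trace_initials (trace_of R w) = initials w"
  unfolding trace_initials_def initials_def mem_trace_of by simp

text \<open>Independent of the chosen representative, since trace equivalence is a congruence.\<close>

definition prepend_trace :: "'a list \<Rightarrow> 'a list set \<Rightarrow> 'a list set" where
  "prepend_trace g Y = trace_of R (g @ (SOME w. w \<in> Y))"

lemma prepend_trace_of:
  assumes "set (g @ w) \<subseteq> A"
  shows "prepend_trace g (trace_of R w) = trace_of R (g @ w)"
proof -
  have "trace_eq R (g @ w) (g @ (SOME v. v \<in> trace_of R w))"
    using trace_eq_append[OF trace_eq_refl trace_eq_some_representative] .
  then show ?thesis
    unfolding prepend_trace_def using trace_of_eq assms by metis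
qed

lemma inj_on_prepend_trace:
  assumes "set g \<subseteq> A" "U \<subseteq> A"
  shows "inj_on (prepend_trace g) (traces_of_length R U k)"
proof (rule inj_onI)
  fix X Y
  assume "X \<in> traces_of_length R U k" "Y \<in> traces_of_length R U k"
    and eq: "prepend_trace g X = prepend_trace g Y"
  then obtain x y where "x \<in> lists U" "X = trace_of R x" "y \<in> lists U" "Y = trace_of R y"
    unfolding traces_of_length_def by auto
  then have x: "set x \<subseteq> A" "X = trace_of R x" and y: "set y \<subseteq> A" "Y = trace_of R y"
    using assms(2) by auto
  have "trace_of R (g @ x) = trace_of R (g @ y)"
    using eq prepend_trace_of assms(1) x y by simp
  then have "trace_eq R (g @ x) (g @ y)"
    by (rule trace_of_eqD)
  then have "trace_eq R x y"
    using trace_eq_append_cancel assms(1) x(1) by simp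
  then show "X = Y"
    using x y trace_of_eq by simp
qed

lemma prepend_trace_image:
  assumes "distinct g" "\<forall>x\<in>set g. \<forall>y\<in>set g. x \<noteq> y \<longrightarrow> \<not> R x y" "set g \<subseteq> U" "U \<subseteq> A"
  shows "prepend_trace g ` traces_of_length R U k
       = {Y \<in> traces_of_length R U (length g + k). set g \<subseteq> trace_initials Y}"
proof (intro equalityI subsetI)
  fix Z assume "Z \<in> prepend_trace g ` traces_of_length R U k"
  then obtain x where x: "x \<in> lists U" "length x = k" "Z = prepend_trace g (trace_of R x)"
    unfolding traces_of_length_def by auto
  moreover have "set (g @ x) \<subseteq> A"
    using x(1) assms(3,4) by auto
  ultimately have Z: "Z = trace_of R (g @ x)"
    using prepend_trace_of by simp
  have "Z \<in> traces_of_length R U (length g + k)"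
    unfolding traces_of_length_def Z using x(1,2) assms(3) by (intro imageI) auto
  moreover have "set g \<subseteq> trace_initials Z"
    using prefix_initials[OF assms(2) trace_eq_refl] Z by simp
  ultimately show "Z \<in> {Y \<in> traces_of_length R U (length g + k). set g \<subseteq> trace_initials Y}"
    by blast
next
  fix Y assume Y: "Y \<in> {Y \<in> traces_of_length R U (length g + k). set g \<subseteq> trace_initials Y}"
  then obtain y where y: "y \<in> lists U" "length y = length g + k" "Y = trace_of R y"
    unfolding traces_of_length_def by auto
  moreover have "set g \<subseteq> initials y"
    using Y y(3) by simp
  moreover have yA: "set y \<subseteq> A"
    using y assms(4) by auto
  ultimately obtain u where u: "trace_eq R y (g @ u)"
    using initials_prefix[OF assms(1)] by blast
  have "u \<in> lists U" "length u = k"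
    using trace_eq_set[OF u] trace_eq_length[OF u] y by auto
  moreover have "set (g @ u) \<subseteq> A"
    using trace_eq_set[OF u] yA by simp
  then have "Y = prepend_trace g (trace_of R u)"
    using prepend_trace_of trace_of_eq[OF u yA] y(3) by simp
  ultimately show "Y \<in> prepend_trace g ` traces_of_length R U k"
    unfolding traces_of_length_def by auto
qed

lemma count_traces_with_initials:
  assumes "\<gamma> \<in> cliques R U" "U \<subseteq> A" "finite U" "card \<gamma> \<le> n"
  shows "count_traces R U (n - card \<gamma>) = card {Y \<in> traces_of_length R U n. \<gamma> \<subseteq> trace_initials Y}"
proof -
  have "finite \<gamma>"
    using assms(1,3) unfolding cliques_def by (auto intro: finite_subset)
  then obtain g where g: "distinct g" "set g = \<gamma>"
    using finite_distinct_list by auto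
  have "length g = card \<gamma>"
    using g distinct_card by metis
  then have n: "length g + (n - card \<gamma>) = n"
    using assms(4) by simp
  have gU: "set g \<subseteq> U" and g_indep: "\<forall>x\<in>set g. \<forall>y\<in>set g. x \<noteq> y \<longrightarrow> \<not> R x y"
    using g assms(1) unfolding cliques_def by auto
  have "count_traces R U (n - card \<gamma>) = card (prepend_trace g ` traces_of_length R U (n - card \<gamma>))"
    unfolding count_traces_def using gU assms(2) by (intro card_image[symmetric] inj_on_prepend_trace) auto
  also have "\<dots> = card {Y \<in> traces_of_length R U n. \<gamma> \<subseteq> trace_initials Y}"
    using prepend_trace_image[OF g(1) g_indep gU assms(2)] n g(2) by simp
  finally show ?thesis .
qed

lemma cliques_of_initials:
  assumes "Y \<in> traces_of_length R U n" "U \<subseteq> A"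
  shows "{\<gamma> \<in> cliques R U. card \<gamma> \<le> n \<and> \<gamma> \<subseteq> trace_initials Y} = Pow (trace_initials Y)"
proof -
  obtain y where y: "y \<in> lists U" "length y = n" "Y = trace_of R y"
    using assms(1) unfolding traces_of_length_def by auto
  have clique: "\<gamma> \<in> cliques R U" "card \<gamma> \<le> n" if "\<gamma> \<subseteq> initials y" for \<gamma>
  proof -
    have "\<gamma> \<subseteq> set y"
      using that initials_subset_set by blast
    then show "card \<gamma> \<le> n"
      using y card_mono[of "set y" \<gamma>] card_length[of y] by auto
    moreover have "set y \<subseteq> U"
      using y(1) by auto
    moreover have "\<not> R c d" if "c \<in> \<gamma>" "d \<in> \<gamma>" "c \<noteq> d" for c d
      using initials_independent \<open>\<gamma> \<subseteq> initials y\<close> that \<open>set y \<subseteq> U\<close> assms(2) by blast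
    ultimately show "\<gamma> \<in> cliques R U"
      using \<open>\<gamma> \<subseteq> set y\<close> unfolding cliques_def by blast
  qed
  have "trace_initials Y = initials y"
    using y by simp
  then show ?thesis
    using clique by blast
qed

lemma trace_initials_nonempty:
  assumes "Y \<in> traces_of_length R U n" "n \<ge> 1"
  shows "trace_initials Y \<noteq> {}" "finite (trace_initials Y)"
proof -
  obtain y where y: "length y = n" "Y = trace_of R y"
    using assms(1) unfolding traces_of_length_def by auto
  then have "y \<noteq> []"
    using assms(2) by auto
  then have "trace_eq R y (hd y # tl y)"
    by simp
  then have "hd y \<in> initials y"
    unfolding initials_def by blast
  then show "trace_initials Y \<noteq> {}"
    using y by auto
  show "finite (trace_initials Y)"
    using y finite_subset[OF initials_subset_set] by simp
qed

end

section \<open>Moebius inversion\<close>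

lemma finite_cliques: "finite U \<Longrightarrow> finite (cliques R U)"
  unfolding cliques_def by auto

lemma empty_in_cliques [simp]: "{} \<in> cliques R U"
  unfolding cliques_def by auto

lemma sum_Pow_sign: "finite I \<Longrightarrow> I \<noteq> {} \<Longrightarrow> (\<Sum>X\<in>Pow I. (-1) ^ card X) = (0::'b::comm_ring_1)"
  using prod_diff_conv_sum[of I "\<lambda>_. 1" "\<lambda>_. (1::'b)"] by (simp add: zero_power card_gt_0_iff)

context dependence_alphabet
begin

text \<open>Each trace of length n is counted once for every set of its initial letters, with
  sign (-1)^card; the signs cancel because a nonempty trace has an initial letter.\<close>

lemma clique_inversion:
  assumes "U \<subseteq> A" "finite U" "n \<ge> 1"
  shows "(\<Sum>\<gamma>\<in>cliques R U. if card \<gamma> \<le> n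
            then (-1) ^ card \<gamma> * of_nat (count_traces R U (n - card \<gamma>)) else 0) = (0::'b::comm_ring_1)"
proof -
  have fin: "finite (traces_of_length R U n)"
    using finite_traces_of_length assms(2) by blast
  have "(\<Sum>\<gamma>\<in>cliques R U. if card \<gamma> \<le> n
            then (-1) ^ card \<gamma> * of_nat (count_traces R U (n - card \<gamma>)) else (0::'b))
      = (\<Sum>\<gamma>\<in>cliques R U. \<Sum>Y\<in>traces_of_length R U n.
            if card \<gamma> \<le> n \<and> \<gamma> \<subseteq> trace_initials Y then (-1) ^ card \<gamma> else 0)"
  proof (rule sum.cong[OF refl])
    fix \<gamma> assume \<gamma>: "\<gamma> \<in> cliques R U"
    show "(if card \<gamma> \<le> n then (-1) ^ card \<gamma> * of_nat (count_traces R U (n - card \<gamma>)) else (0::'b))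
        = (\<Sum>Y\<in>traces_of_length R U n. if card \<gamma> \<le> n \<and> \<gamma> \<subseteq> trace_initials Y then (-1) ^ card \<gamma> else 0)"
      using count_traces_with_initials[OF \<gamma> assms(1,2)]
      by (simp add: sum.inter_filter[OF fin, symmetric] sum_distrib_left)
  qed
  also have "\<dots> = (\<Sum>Y\<in>traces_of_length R U n. \<Sum>\<gamma>\<in>cliques R U.
            if card \<gamma> \<le> n \<and> \<gamma> \<subseteq> trace_initials Y then (-1) ^ card \<gamma> else 0)"
    by (rule sum.swap)
  also have "\<dots> = (\<Sum>Y\<in>traces_of_length R U n. \<Sum>\<gamma>\<in>Pow (trace_initials Y). (-1) ^ card \<gamma>)"
  proof (rule sum.cong[OF refl])
    fix Y assume "Y \<in> traces_of_length R U n"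
    then have Pow: "Pow (trace_initials Y) = {\<gamma> \<in> cliques R U. card \<gamma> \<le> n \<and> \<gamma> \<subseteq> trace_initials Y}"
      using cliques_of_initials assms(1) by blast
    show "(\<Sum>\<gamma>\<in>cliques R U. if card \<gamma> \<le> n \<and> \<gamma> \<subseteq> trace_initials Y then (-1) ^ card \<gamma> else (0::'b))
        = (\<Sum>\<gamma>\<in>Pow (trace_initials Y). (-1) ^ card \<gamma>)"
      unfolding Pow by (rule sum.inter_filter[OF finite_cliques[OF assms(2)], symmetric])
  qed
  also have "\<dots> = 0"
    using trace_initials_nonempty[OF _ assms(3)] by (simp add: sum_Pow_sign)
  finally show ?thesis .
qed

end

definition clique_poly :: "('a \<Rightarrow> 'a \<Rightarrow> bool) \<Rightarrow> 'a set \<Rightarrow> 'b::comm_ring_1 poly" where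
  "clique_poly R U = (\<Sum>\<gamma>\<in>cliques R U. monom ((-1) ^ card \<gamma>) (card \<gamma>))"

definition trace_gf :: "('a \<Rightarrow> 'a \<Rightarrow> bool) \<Rightarrow> 'a set \<Rightarrow> 'b::comm_ring_1 fps" where
  "trace_gf R U = Abs_fps (\<lambda>n. of_nat (count_traces R U n))"

lemma poly_clique_poly: "poly (clique_poly R U) x = mu R U x"
  unfolding clique_poly_def mu_def by (simp add: poly_sum poly_monom)

lemma coeff_clique_poly:
  "coeff (clique_poly R U) k = (\<Sum>\<gamma>\<in>cliques R U. if card \<gamma> = k then (-1) ^ card \<gamma> else 0)"
  unfolding clique_poly_def by (simp add: coeff_sum)

lemma fps_nth_trace_gf_mult_clique_poly:
  "fps_nth (trace_gf R U * fps_of_poly (clique_poly R U)) n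
     = (\<Sum>\<gamma>\<in>cliques R U. if card \<gamma> \<le> n
          then (-1) ^ card \<gamma> * of_nat (count_traces R U (n - card \<gamma>)) else (0::'b::comm_ring_1))"
proof -
  have "fps_nth (trace_gf R U * fps_of_poly (clique_poly R U)) n
      = (\<Sum>i=0..n. of_nat (count_traces R U i)
           * (\<Sum>\<gamma>\<in>cliques R U. if card \<gamma> = n - i then (-1) ^ card \<gamma> else (0::'b)))"
    by (simp add: fps_mult_nth trace_gf_def coeff_clique_poly)
  also have "\<dots> = (\<Sum>i=0..n. \<Sum>\<gamma>\<in>cliques R U.
           if card \<gamma> = n - i then (-1) ^ card \<gamma> * of_nat (count_traces R U i) else 0)"
    by (simp add: sum_distrib_left if_distrib mult.commute cong: if_cong)
  also have "\<dots> = (\<Sum>\<gamma>\<in>cliques R U. \<Sum>i=0..n.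
           if card \<gamma> = n - i then (-1) ^ card \<gamma> * of_nat (count_traces R U i) else 0)"
    by (rule sum.swap)
  also have "\<dots> = (\<Sum>\<gamma>\<in>cliques R U. if card \<gamma> \<le> n
          then (-1) ^ card \<gamma> * of_nat (count_traces R U (n - card \<gamma>)) else 0)"
  proof (rule sum.cong[OF refl])
    fix \<gamma> :: "'a set"
    have "(\<Sum>i=0..n. if card \<gamma> = n - i then (-1) ^ card \<gamma> * of_nat (count_traces R U i) else (0::'b))
        = (\<Sum>i=0..n. if i = n - card \<gamma> \<and> card \<gamma> \<le> n
             then (-1) ^ card \<gamma> * of_nat (count_traces R U i) else 0)"
      by (rule sum.cong) auto
    then show "(\<Sum>i=0..n. if card \<gamma> = n - i then (-1) ^ card \<gamma> * of_nat (count_traces R U i) else (0::'b))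
        = (if card \<gamma> \<le> n then (-1) ^ card \<gamma> * of_nat (count_traces R U (n - card \<gamma>)) else 0)"
      by (simp add: sum.delta')
  qed
  finally show ?thesis .
qed

lemma (in dependence_alphabet) trace_gf_mult_clique_poly:
  assumes "U \<subseteq> A" "finite U"
  shows "trace_gf R U * fps_of_poly (clique_poly R U) = (1 :: 'b::comm_ring_1 fps)"
proof (rule fps_ext)
  fix n
  show "fps_nth (trace_gf R U * fps_of_poly (clique_poly R U)) n = fps_nth (1::'b fps) n"
  proof (cases "n = 0")
    case True
    have "fps_nth (trace_gf R U * fps_of_poly (clique_poly R U)) 0
        = (\<Sum>\<gamma>\<in>cliques R U. if \<gamma> = {} then 1 else (0::'b))"
      unfolding fps_nth_trace_gf_mult_clique_poly
      using assms(2) by (intro sum.cong) (auto simp: cliques_def dest: finite_subset)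
    then show ?thesis
      using True finite_cliques[OF assms(2)] by simp
  next
    case False
    then show ?thesis
      using clique_inversion[OF assms, of n] by (simp add: fps_nth_trace_gf_mult_clique_poly)
  qed
qed

section \<open>The clique polynomial below its smallest root\<close>

lemma (in dependence_alphabet) cliques_insert:
  assumes "b \<in> A" "U \<subseteq> A" "b \<notin> U"
  shows "cliques R (insert b U) = cliques R U \<union> insert b ` cliques R (U - ell R A b)"
proof (intro equalityI subsetI)
  fix \<gamma> assume \<gamma>: "\<gamma> \<in> cliques R (insert b U)"
  show "\<gamma> \<in> cliques R U \<union> insert b ` cliques R (U - ell R A b)"
  proof (cases "b \<in> \<gamma>")
    case True
    then have "\<gamma> - {b} \<in> cliques R (U - ell R A b)"
      using \<gamma> unfolding cliques_def ell_def by auto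
    moreover have "\<gamma> = insert b (\<gamma> - {b})"
      using True by auto
    ultimately show ?thesis
      by blast
  next
    case False
    then show ?thesis
      using \<gamma> unfolding cliques_def by auto
  qed
next
  fix \<gamma> assume "\<gamma> \<in> cliques R U \<union> insert b ` cliques R (U - ell R A b)"
  moreover have "\<not> R y b" if "y \<in> U - ell R A b" for y
    using that sym_R assms(1,2) unfolding ell_def by auto
  ultimately show "\<gamma> \<in> cliques R (insert b U)"
    using assms(2) unfolding cliques_def ell_def by auto
qed

lemma (in dependence_alphabet) mu_insert:
  assumes "b \<in> A" "U \<subseteq> A" "b \<notin> U" "finite U"
  shows "mu R (insert b U) X = mu R U X - X * mu R (U - ell R A b) X"
proof -
  have disjoint: "cliques R U \<inter> insert b ` cliques R (U - ell R A b) = {}"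
    using assms(3) unfolding cliques_def by auto
  have inj: "inj_on (insert b) (cliques R (U - ell R A b))"
  proof (rule inj_onI)
    fix \<delta> \<delta>' assume "\<delta> \<in> cliques R (U - ell R A b)" "\<delta>' \<in> cliques R (U - ell R A b)"
      and "insert b \<delta> = insert b \<delta>'"
    moreover have "b \<notin> \<delta>" "b \<notin> \<delta>'"
      using calculation assms(3) unfolding cliques_def by auto
    ultimately show "\<delta> = \<delta>'"
      by (metis Diff_insert_absorb)
  qed
  have card_insert: "card (insert b \<delta>) = Suc (card \<delta>)" if "\<delta> \<in> cliques R (U - ell R A b)" for \<delta>
  proof -
    have "\<delta> \<subseteq> U" "b \<notin> \<delta>"
      using that assms(3) unfolding cliques_def by auto
    then show ?thesis
      using finite_subset[OF _ assms(4)] by simp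
  qed
  have "mu R (insert b U) X
      = mu R U X + (\<Sum>\<gamma>\<in>insert b ` cliques R (U - ell R A b). (-1) ^ card \<gamma> * X ^ card \<gamma>)"
    unfolding mu_def cliques_insert[OF assms(1-3)]
    using finite_cliques assms(4) disjoint by (intro sum.union_disjoint) auto
  also have "(\<Sum>\<gamma>\<in>insert b ` cliques R (U - ell R A b). (-1) ^ card \<gamma> * X ^ card \<gamma>)
      = (\<Sum>\<delta>\<in>cliques R (U - ell R A b). - (X * ((-1) ^ card \<delta> * X ^ card \<delta>)))"
    by (simp add: sum.reindex[OF inj] card_insert mult.left_commute)
  also have "\<dots> = - (X * mu R (U - ell R A b) X)"
    unfolding mu_def by (simp add: sum_negf sum_distrib_left)
  finally show ?thesis
    by simp
qed

lemma mu_nonzero_below_p_Sigma: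
  assumes "norm (z::complex) < p_Sigma R A"
  shows "mu R A z \<noteq> 0"
proof
  assume "mu R A z = 0"
  then have "p_Sigma R A \<le> norm z"
    unfolding p_Sigma_def by (intro cInf_lower bdd_belowI[of _ 0]) auto
  then show False
    using assms by simp
qed

definition trace_series :: "('a \<Rightarrow> 'a \<Rightarrow> bool) \<Rightarrow> 'a set \<Rightarrow> real \<Rightarrow> real" where
  "trace_series R U q = (\<Sum>n. real (count_traces R U n) * q ^ n)"

locale finite_dependence_alphabet = dependence_alphabet +
  assumes finite_A: "finite A"
begin

text \<open>The generating function of all traces is the inverse of the clique polynomial, which
  has no zero of modulus less than p_Sigma.\<close>

lemma conv_radius_trace_gf: "ereal (p_Sigma R A) \<le> fps_conv_radius (trace_gf R A :: complex fps)"
proof -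
  define P where "P = fps_of_poly (clique_poly R A :: complex poly)"
  have "inverse P = trace_gf R A"
    using trace_gf_mult_clique_poly[of A] finite_A unfolding P_def
    by (intro fps_inverse_unique) (simp add: mult.commute)
  moreover have "eval_fps P z \<noteq> 0" if "ereal (norm z) < ereal (p_Sigma R A)" for z
    using that mu_nonzero_below_p_Sigma unfolding P_def by (simp add: poly_clique_poly)
  then have "min (ereal (p_Sigma R A)) (fps_conv_radius P) \<le> fps_conv_radius (inverse P)"
    by (rule fps_conv_radius_inverse)
  ultimately show ?thesis
    unfolding P_def by simp
qed

lemma summable_count_traces:
  assumes "U \<subseteq> A" "0 \<le> q" "q < p_Sigma R A"
  shows "summable (\<lambda>n. real (count_traces R U n) * q ^ n)"
proof (rule summable_comparison_test)
  have "ereal (norm (complex_of_real q)) < ereal (p_Sigma R A)"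
    using assms(2,3) by simp
  then have "ereal (norm (complex_of_real q)) < fps_conv_radius (trace_gf R A :: complex fps)"
    using conv_radius_trace_gf by (rule order.strict_trans2)
  then have "summable (\<lambda>n. norm (fps_nth (trace_gf R A :: complex fps) n * complex_of_real q ^ n))"
    by (rule norm_summable_fps)
  then show "summable (\<lambda>n. real (count_traces R A n) * q ^ n)"
    using assms(2) by (simp add: trace_gf_def norm_mult norm_power)
  show "\<exists>N. \<forall>n\<ge>N. norm (real (count_traces R U n) * q ^ n) \<le> real (count_traces R A n) * q ^ n"
    using count_traces_mono[OF assms(1) finite_A] assms(2) by (auto intro!: mult_right_mono)
qed

lemma mu_mult_trace_series:
  assumes "U \<subseteq> A" "0 \<le> p" "p < p_Sigma R A"
  shows "mu R U p * trace_series R U p = 1"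
proof -
  define q where "q = (p + p_Sigma R A) / 2"
  have "summable (\<lambda>n. fps_nth (trace_gf R U :: real fps) n * q ^ n)"
    using summable_count_traces[OF assms(1)] assms(2,3) unfolding q_def trace_gf_def by simp
  then have "ereal (norm q) \<le> fps_conv_radius (trace_gf R U :: real fps)"
    unfolding fps_conv_radius_def by (rule conv_radius_geI)
  moreover have "ereal (norm p) < ereal (norm q)"
    using assms(2,3) unfolding q_def by simp
  ultimately have radius: "ereal (norm p) < fps_conv_radius (trace_gf R U :: real fps)"
    using order.strict_trans2 by blast
  have "finite U"
    using assms(1) finite_A finite_subset by blast
  then have "trace_gf R U * fps_of_poly (clique_poly R U) = (1 :: real fps)"
    by (rule trace_gf_mult_clique_poly[OF assms(1)])
  then have "1 = eval_fps (trace_gf R U * fps_of_poly (clique_poly R U)) p"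
    by simp
  also have "\<dots> = eval_fps (trace_gf R U) p * eval_fps (fps_of_poly (clique_poly R U)) p"
    using radius by (intro eval_fps_mult) auto
  also have "eval_fps (trace_gf R U) p = trace_series R U p"
    by (simp add: eval_fps_def trace_gf_def trace_series_def)
  finally show ?thesis
    by (simp add: poly_clique_poly mult.commute)
qed

lemma one_le_trace_series:
  assumes "U \<subseteq> A" "0 \<le> p" "p < p_Sigma R A"
  shows "1 \<le> trace_series R U p"
  using sum_le_suminf[OF summable_count_traces[OF assms], of "{0}"] assms(2)
  unfolding trace_series_def by simp

lemma mu_eq_inverse_trace_series:
  assumes "U \<subseteq> A" "0 \<le> p" "p < p_Sigma R A"
  shows "mu R U p = 1 / trace_series R U p"
  using mu_mult_trace_series[OF assms] one_le_trace_series[OF assms] by (simp add: eq_divide_eq)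

lemma mu_pos:
  assumes "U \<subseteq> A" "0 \<le> p" "p < p_Sigma R A"
  shows "0 < mu R U p"
  using mu_eq_inverse_trace_series[OF assms] one_le_trace_series[OF assms] by simp

lemma mu_antimono:
  assumes "U \<subseteq> V" "V \<subseteq> A" "0 \<le> p" "p < p_Sigma R A"
  shows "mu R V p \<le> mu R U p"
proof -
  have UA: "U \<subseteq> A"
    using assms(1,2) by blast
  have "finite V"
    using assms(2) finite_A finite_subset by blast
  then have "real (count_traces R U n) * p ^ n \<le> real (count_traces R V n) * p ^ n" for n
    using count_traces_mono[OF assms(1)] assms(3) by (intro mult_right_mono) auto
  then have "trace_series R U p \<le> trace_series R V p"
    unfolding trace_series_def
    by (intro suminf_le summable_count_traces UA assms(2-4))
  then show ?thesis
    using mu_eq_inverse_trace_series[OF UA assms(3,4)] mu_eq_inverse_trace_series[OF assms(2-4)]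
      one_le_trace_series[OF UA assms(3,4)] by (simp add: frac_le)
qed

lemma has_sum_trace_monoid:
  assumes "U \<subseteq> A" "0 \<le> p" "p < p_Sigma R A"
  shows "((\<lambda>x. p ^ trace_len x) has_sum trace_series R U p) (trace_monoid R U)"
proof -
  have "finite U"
    using assms(1) finite_A finite_subset by blast
  let ?f = "\<lambda>(n::nat, x::'a list set). p ^ n"
  have fibre: "((\<lambda>x. ?f (n, x)) has_sum (real (count_traces R U n) * p ^ n)) (traces_of_length R U n)"
    for n
    using finite_traces_of_length[OF \<open>finite U\<close>] by (simp add: has_sum_finiteI count_traces_def)
  have total: "((\<lambda>n. real (count_traces R U n) * p ^ n) has_sum trace_series R U p) UNIV"
    unfolding trace_series_def using summable_count_traces[OF assms] assms(2)
    by (intro sums_nonneg_imp_has_sum summable_sums) auto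
  have "?f summable_on Sigma UNIV (traces_of_length R U)"
    using fibre total assms(2) by (intro summable_on_SigmaI) (auto simp: summable_on_def)
  then have "(?f has_sum trace_series R U p) (Sigma UNIV (traces_of_length R U))"
    by (rule has_sum_SigmaI[OF fibre total])
  moreover have "bij_betw (\<lambda>x. (trace_len x, x)) (trace_monoid R U) (Sigma UNIV (traces_of_length R U))"
    unfolding trace_monoid_def traces_of_length_def by (rule bij_betwI') auto
  ultimately have "((\<lambda>x. ?f (trace_len x, x)) has_sum trace_series R U p) (trace_monoid R U)"
    using has_sum_reindex_bij_betw by blast
  then show ?thesis
    by simp
qed

lemma p_mult_mu_less:
  assumes "a \<in> A" "U \<subseteq> A" "a \<notin> U" "0 < p" "p < p_Sigma R A"
  shows "p * mu R (U - ell R A a) p < mu R U p"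
proof -
  have "0 < mu R (insert a U) p"
    using mu_pos assms by simp
  moreover have "mu R (insert a U) p = mu R U p - p * mu R (U - ell R A a) p"
    using mu_insert[OF assms(1-3)] finite_subset[OF assms(2) finite_A] by blast
  ultimately show ?thesis
    by linarith
qed

lemma mu_le_one_minus_mult:
  assumes "b \<in> U" "U \<subseteq> A" "0 \<le> p" "p < p_Sigma R A"
  shows "mu R U p \<le> (1 - p) * mu R (U - {b}) p"
proof -
  have "U = insert b (U - {b})"
    using assms(1) by blast
  then have "mu R U p = mu R (U - {b}) p - p * mu R (U - {b} - ell R A b) p"
    using mu_insert[of b "U - {b}"] assms(1,2) finite_subset[OF assms(2) finite_A] by auto
  moreover have "mu R (U - {b}) p \<le> mu R (U - {b} - ell R A b) p"
    using mu_antimono[of "U - {b} - ell R A b" "U - {b}"] assms(2-4) by auto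
  then have "p * mu R (U - {b}) p \<le> p * mu R (U - {b} - ell R A b) p"
    using assms(3) by (rule mult_left_mono)
  ultimately show ?thesis
    by (simp add: algebra_simps)
qed

end

theorem mainTheorem12:
  fixes R :: "'a \<Rightarrow> 'a \<Rightarrow> bool" and \<Sigma> S T :: "'a set" and a :: 'a and p :: real
  assumes "finite \<Sigma>"
    and "\<forall>x\<in>\<Sigma>. R x x"
    and "\<forall>x\<in>\<Sigma>. \<forall>y\<in>\<Sigma>. R x y \<longrightarrow> R y x"
    and "0 < p" and "p < p_Sigma R \<Sigma>"
    and "S \<subseteq> \<Sigma>"
    and "a \<in> \<Sigma> - S"
    and "ell R \<Sigma> a \<inter> S \<noteq> {}"
    and "T = S - ell R \<Sigma> a"
  shows "mu R S p / mu R T p = B R S p (trace_monoid R T)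
         \<and> p \<le> mu R S p / mu R T p \<and> mu R S p / mu R T p \<le> 1 - p"
proof -
  interpret finite_dependence_alphabet R \<Sigma>
    using assms(1-3) by unfold_locales
  have T: "T \<subseteq> \<Sigma>"
    using assms(6,9) by blast
  have mu_T: "0 < mu R T p" "mu R T p = 1 / trace_series R T p"
    using mu_pos[OF T] mu_eq_inverse_trace_series[OF T] assms(4,5) by auto
  have "B R S p (trace_monoid R T) = mu R S p * trace_series R T p"
    unfolding B_def using has_sum_trace_monoid[OF T] assms(4,5)
    by (simp add: infsum_cmult_right' infsumI)
  then have B: "mu R S p / mu R T p = B R S p (trace_monoid R T)"
    using mu_T(2) by simp
  have "p * mu R T p < mu R S p"
    using p_mult_mu_less assms(4-7,9) by auto
  then have lower: "p \<le> mu R S p / mu R T p"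
    using mu_T(1) by (simp add: le_divide_eq)
  obtain b where b: "b \<in> S" "b \<in> ell R \<Sigma> a"
    using assms(8) by blast
  have mu_Sb: "0 < mu R (S - {b}) p" "mu R (S - {b}) p \<le> mu R T p"
    using mu_pos[of "S - {b}" p] mu_antimono[of T "S - {b}" p] b assms(4-6,9) by auto
  have "mu R S p / mu R T p \<le> mu R S p / mu R (S - {b}) p"
    using mu_Sb mu_pos[of S p] assms(4-6) by (intro divide_left_mono) auto
  also have "\<dots> \<le> 1 - p"
    using mu_le_one_minus_mult[of b S p] b(1) mu_Sb(1) assms(4-6) by (simp add: divide_le_eq)
  finally show ?thesis
    using B lower by blast
qed

end
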